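(* Let $q,q',n$ be integers with $q'\ge 2q+1>4$ and $n>1$. Let $S$ be an $\mathcal{OS}_q(n)$ of period $m$ with ring sequence $[s_0,\ldots,s_{m-1}]$ where $s_0=0$. For $x\in\mathbb{Z}_q$ let $x'$ denote the class in $\mathbb{Z}_{q'}$ of the integer in $\{0,\ldots,q-1\}$ representing $x$. Let $S''$ be the sequence over $\mathbb{Z}_{q'}$ with ring sequence $[s_0',\ldots,s_{m-1}',-s_0',\ldots,-s_{m-1}']$. Define $t_i=(-1)^{i+m-1}s_i'$ if $s_i'\neq0$ and $t_i=(-1)^{i+m-1}q$ if $s_i'=0$ ($0\le i\le m-1$), and let $T'$ be the sequence over $\mathbb{Z}_{q'}$ with ring sequence $[t_0,\ldots,t_{m-1},-t_0,\ldots,-t_{m-1}]$. Then $S''$ and $T'$ are s-disjoint.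
   Context: For a periodic sequence $S=(s_i)$ write $\mathbf{s}_n(i)=(s_i,\ldots,s_{i+n-1})$; $\mathbf{u}^R$ is the reverse of a tuple and $-\mathbf{u}$ its termwise negative. An $n$-window sequence of period $m$ satisfies $\mathbf{s}_n(i)=\mathbf{s}_n(j)\Rightarrow i\equiv j\pmod m$; an $\mathcal{OS}_q(n)$ is a $q$-ary $n$-window sequence with $\mathbf{s}_n(i)\neq\mathbf{s}_n(j)^R$ for all $i,j$. The ring sequence of a sequence of period $m$ is one period. Two $n$-window sequences $S=(s_i)$, $T=(t_i)$ are s-disjoint if for all $i,j$: $\mathbf{s}_n(i)\neq\mathbf{t}_n(j)$, $\mathbf{s}_n(i)\neq\mathbf{t}_n(j)^R$ and $\mathbf{s}_n(i)\neq-\mathbf{t}_n(j)^R$. *)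

theory Defs
  imports Main
begin

(* Sequences are functions nat => int; elements of Z_q are represented by
   their canonical representatives in {0..<q}. *)

definition window :: "(nat \<Rightarrow> int) \<Rightarrow> nat \<Rightarrow> nat \<Rightarrow> int list" where
  "window s n i = map (\<lambda>k. s (i + k)) [0..<n]"

definition ring_seq :: "int list \<Rightarrow> nat \<Rightarrow> int" where
  "ring_seq xs i = xs ! (i mod length xs)"

definition neg_mod :: "int \<Rightarrow> int list \<Rightarrow> int list" where
  "neg_mod q xs = map (\<lambda>x. (- x) mod q) xs"

definition window_seq :: "(nat \<Rightarrow> int) \<Rightarrow> nat \<Rightarrow> nat \<Rightarrow> bool" where
  "window_seq s n m \<longleftrightarrow> m > 0 \<and> (\<forall>i. s (i + m) = s i) \<and>
     (\<forall>i j. window s n i = window s n j \<longrightarrow> i mod m = j mod m)"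

definition OS :: "int \<Rightarrow> nat \<Rightarrow> (nat \<Rightarrow> int) \<Rightarrow> nat \<Rightarrow> bool" where
  "OS q n s m \<longleftrightarrow> (\<forall>i. 0 \<le> s i \<and> s i < q) \<and> window_seq s n m \<and>
     (\<forall>i j. window s n i \<noteq> rev (window s n j))"

definition s_disjoint :: "int \<Rightarrow> nat \<Rightarrow> (nat \<Rightarrow> int) \<Rightarrow> (nat \<Rightarrow> int) \<Rightarrow> bool" where
  "s_disjoint q n S T \<longleftrightarrow> (\<forall>i j. window S n i \<noteq> window T n j \<and>
     window S n i \<noteq> rev (window T n j) \<and>
     window S n i \<noteq> neg_mod q (rev (window T n j)))"

end

theory Submission
  imports Defs
begin

(* Read residues mod q' as signed integers.  Since q' \<ge> 2q + 1, the nonzero entries of S'' are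
   the residues of \<plusminus>1, ..., \<plusminus>(q - 1), and two consecutive entries are either of the same
   sign or one of them is zero: inside each half of the period they carry the sign of that half,
   and at the two junctions one of them is s_0 = 0.  The entries of T' are nonzero and their
   signs alternate, except at the junctions, where one of the two entries is \<plusminus>q, a value S''
   never takes.  Negation preserves both patterns and reversal does not affect them, so the
   first two entries of a window already tell S'' apart from T', its reversal and its negated
   reversal. *)

lemma minus_mod_eq_sub: "0 < a \<Longrightarrow> a < p \<Longrightarrow> (- a) mod p = p - a" for a p :: int
  by (simp add: zmod_zminus1_eq_if)

lemma signed_residue:
  fixes u p :: int
  assumes "0 < u" "u < p"
  shows "((-1) ^ e * u) mod p = (if even e then u else p - u)"
  using assms by (simp add: minus_mod_eq_sub)

lemma window_nth: "k < n \<Longrightarrow> window S n i ! k = S (i + k)"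
  by (simp add: window_def)

lemma window_eq_first_two:
  assumes "1 < n" "window S n i = window T n j"
  shows "S i = T j \<and> S (Suc i) = T (Suc j)"
  using arg_cong[OF assms(2), of "\<lambda>w. w ! 0"] arg_cong[OF assms(2), of "\<lambda>w. w ! 1"] assms(1)
  by (simp add: window_nth)

lemma window_eq_map_rev_first_two:
  assumes "1 < n" "window S n i = map h (rev (window T n j))"
  shows "S i = h (T (Suc (j + n - 2))) \<and> S (Suc i) = h (T (j + n - 2))"
proof -
  have "j + (n - 1) = Suc (j + n - 2)" using assms(1) by auto
  then show ?thesis
    using arg_cong[OF assms(2), of "\<lambda>w. w ! 0"] arg_cong[OF assms(2), of "\<lambda>w. w ! 1"] assms(1)
    by (simp add: window_def rev_nth numeral_2_eq_2)
qed

lemma ring_seq_append: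
  assumes "0 < m"
  shows "ring_seq (map f [0..<m] @ map g [0..<m]) k
           = (if k mod (2 * m) < m then f (k mod (2 * m)) else g (k mod (2 * m) - m))"
proof -
  have "k mod (2 * m) < 2 * m" using assms by simp
  then show ?thesis by (auto simp: ring_seq_def nth_append mult_2)
qed

lemma ring_seq_append_in:
  assumes "0 < m" "\<And>r. r < m \<Longrightarrow> f r \<in> X" "\<And>r. r < m \<Longrightarrow> g r \<in> X"
  shows "ring_seq (map f [0..<m] @ map g [0..<m]) k \<in> X"
proof -
  have "k mod (2 * m) < 2 * m" using assms(1) by simp
  then have "k mod (2 * m) - m < m" by linarith
  then show ?thesis using assms by (simp add: ring_seq_append)
qed

lemma ring_seq_append_adjacent:
  assumes "0 < m"
    and "\<And>r. Suc r < m \<Longrightarrow> P (f r) (f (Suc r))"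
    and "P (f (m - 1)) (g 0)"
    and "\<And>r. Suc r < m \<Longrightarrow> P (g r) (g (Suc r))"
    and "P (g (m - 1)) (f 0)"
  shows "P (ring_seq (map f [0..<m] @ map g [0..<m]) k)
           (ring_seq (map f [0..<m] @ map g [0..<m]) (Suc k))"
proof -
  define r where "r = k mod (2 * m)"
  have "r < 2 * m" using assms(1) by (simp add: r_def)
  have succ: "Suc k mod (2 * m) = (if Suc r = 2 * m then 0 else Suc r)"
    by (simp add: r_def mod_Suc)
  note val = ring_seq_append[OF assms(1)]
  consider "Suc r < m" | "Suc r = m" | "m \<le> r" "Suc r < 2 * m" | "Suc r = 2 * m"
    using \<open>r < 2 * m\<close> by linarith
  then show ?thesis
  proof cases
    case 1
    then show ?thesis using assms(2)[of r] by (simp add: val succ flip: r_def)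
  next
    case 2
    then have "r = m - 1" by simp
    then show ?thesis using assms(3) \<open>Suc r = m\<close> by (simp add: val succ flip: r_def)
  next
    case 3
    then show ?thesis using assms(4)[of "r - m"] by (simp add: val succ Suc_diff_le flip: r_def)
  next
    case 4
    then have "r - m = m - 1" by simp
    then show ?thesis using assms(5) \<open>Suc r = 2 * m\<close> by (simp add: val succ flip: r_def)
  qed
qed

(* a and b, read as signed residues mod p, both lie in (0, q) or both in (-q, 0) *)
definition same_sign :: "int \<Rightarrow> int \<Rightarrow> int \<Rightarrow> int \<Rightarrow> bool" where
  "same_sign q p a b \<longleftrightarrow>
     (a \<in> {1..<q} \<and> b \<in> {1..<q}) \<or> (a \<in> {p - q<..<p} \<and> b \<in> {p - q<..<p})"

lemma same_sign_commute: "same_sign q p a b \<longleftrightarrow> same_sign q p b a"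
  by (auto simp: same_sign_def)

lemma same_sign_neg:
  assumes "a \<in> {0<..<p}" "b \<in> {0<..<p}"
  shows "same_sign q p ((- a) mod p) ((- b) mod p) \<longleftrightarrow> same_sign q p a b"
  using assms by (auto simp: same_sign_def minus_mod_eq_sub)

lemma not_same_sign_boundary: "2 * q \<le> p \<Longrightarrow> c \<in> {q, p - q} \<Longrightarrow> \<not> same_sign q p a c"
  by (auto simp: same_sign_def)

lemma not_same_sign_opposite:
  "2 * q \<le> p \<Longrightarrow> a \<in> {1..q} \<Longrightarrow> b \<in> {p - q..<p} \<Longrightarrow> \<not> same_sign q p a b"
  by (auto simp: same_sign_def)

lemma s_disjoint_if_sign_pattern:
  assumes "1 < n"
    and S_pairs: "\<And>i. S i = 0 \<or> S (Suc i) = 0 \<or> same_sign q p (S i) (S (Suc i))"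
    and T_range: "\<And>j. T j \<in> {0<..<p}"
    and T_pairs: "\<And>j. \<not> same_sign q p (T j) (T (Suc j))"
  shows "s_disjoint p n S T"
proof -
  have T_nonzero: "T j \<noteq> 0" "(- T j) mod p \<noteq> 0" for j
    using T_range[of j] by (auto simp: minus_mod_eq_sub)
  have T_rev_pairs: "\<not> same_sign q p (T (Suc j)) (T j)" for j
    using T_pairs same_sign_commute by blast
  have T_neg_rev_pairs: "\<not> same_sign q p ((- T (Suc j)) mod p) ((- T j) mod p)" for j
    using T_rev_pairs T_range by (simp add: same_sign_neg)
  show ?thesis
    unfolding s_disjoint_def neg_mod_def
  proof (intro allI conjI notI)
    fix i j
    assume "window S n i = window T n j"
    then show False
      using window_eq_first_two[OF \<open>1 < n\<close>] S_pairs[of i] T_nonzero T_pairs[of j] by metis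
  next
    fix i j
    assume "window S n i = rev (window T n j)"
    then have "window S n i = map (\<lambda>x. x) (rev (window T n j))" by simp
    then show False
      using window_eq_map_rev_first_two[OF \<open>1 < n\<close>] S_pairs[of i] T_nonzero T_rev_pairs
      by metis
  next
    fix i j
    assume "window S n i = map (\<lambda>x. (- x) mod p) (rev (window T n j))"
    then show False
      using window_eq_map_rev_first_two[OF \<open>1 < n\<close>] S_pairs[of i] T_nonzero T_neg_rev_pairs
      by metis
  qed
qed

definition neg_extend :: "int \<Rightarrow> nat \<Rightarrow> (nat \<Rightarrow> int) \<Rightarrow> nat \<Rightarrow> int" where
  "neg_extend p m f = ring_seq (map f [0..<m] @ map (\<lambda>i. (- f i) mod p) [0..<m])"

lemma neg_extend_range:
  assumes "0 < m" "\<And>r. r < m \<Longrightarrow> f r \<in> {0<..<p}"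
  shows "neg_extend p m f k \<in> {0<..<p}"
  unfolding neg_extend_def using assms by (intro ring_seq_append_in) (auto simp: minus_mod_eq_sub)

lemma neg_extend_zero_or_same_sign:
  assumes "0 < m" "q \<le> p" "\<And>r. s r \<in> {0..<q}" "s 0 = 0"
  shows "neg_extend p m s k = 0 \<or> neg_extend p m s (Suc k) = 0
           \<or> same_sign q p (neg_extend p m s k) (neg_extend p m s (Suc k))"
  unfolding neg_extend_def
proof (rule ring_seq_append_adjacent[OF \<open>0 < m\<close>])
  fix r
  show "s r = 0 \<or> s (Suc r) = 0 \<or> same_sign q p (s r) (s (Suc r))"
    using assms(3)[of r] assms(3)[of "Suc r"] by (auto simp: same_sign_def)
  moreover have "s r \<in> {0<..<p}" if "s r \<noteq> 0" for r
    using that assms(2) assms(3)[of r] by auto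
  ultimately show "(- s r) mod p = 0 \<or> (- s (Suc r)) mod p = 0
      \<or> same_sign q p ((- s r) mod p) ((- s (Suc r)) mod p)"
    by (metis same_sign_neg minus_zero mod_0)
qed (use \<open>s 0 = 0\<close> in simp_all)

lemma neg_extend_alternating_not_same_sign:
  assumes "0 < m" "2 * q \<le> p"
    and range: "\<And>r. r < m \<Longrightarrow> t r \<in> {0<..<p}"
    and alternating: "\<And>r. Suc r < m \<Longrightarrow>
      t r \<in> {1..q} \<and> t (Suc r) \<in> {p - q..<p} \<or> t r \<in> {p - q..<p} \<and> t (Suc r) \<in> {1..q}"
    and start: "t 0 \<in> {q, p - q}"
  shows "\<not> same_sign q p (neg_extend p m t k) (neg_extend p m t (Suc k))"
  unfolding neg_extend_def
proof (rule ring_seq_append_adjacent[OF \<open>0 < m\<close>])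
  fix r
  assume "Suc r < m"
  then show "\<not> same_sign q p (t r) (t (Suc r))"
    using alternating[of r] not_same_sign_opposite[OF \<open>2 * q \<le> p\<close>] same_sign_commute by metis
  then show "\<not> same_sign q p ((- t r) mod p) ((- t (Suc r)) mod p)"
    using range \<open>Suc r < m\<close> by (simp add: same_sign_neg)
next
  have "(- t 0) mod p \<in> {q, p - q}"
    using start range[OF \<open>0 < m\<close>] by (auto simp: minus_mod_eq_sub)
  then show "\<not> same_sign q p (t (m - 1)) ((- t 0) mod p)"
    using not_same_sign_boundary[OF \<open>2 * q \<le> p\<close>] by blast
next
  show "\<not> same_sign q p ((- t (m - 1)) mod p) (t 0)"
    using not_same_sign_boundary[OF \<open>2 * q \<le> p\<close> start] .
qed

lemma neg_extend_signed:
  fixes q p :: int and c :: nat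
  assumes "0 < m" "2 * q \<le> p" "\<And>r. u r \<in> {1..q}" "u 0 = q"
  defines "t \<equiv> \<lambda>r. ((-1) ^ (r + c) * u r) mod p"
  shows "neg_extend p m t k \<in> {0<..<p}"
    and "\<not> same_sign q p (neg_extend p m t k) (neg_extend p m t (Suc k))"
proof -
  have t_eq: "t r = (if even (r + c) then u r else p - u r)" for r
    using assms(2) assms(3)[of r] by (simp add: t_def signed_residue)
  have range: "t r \<in> {0<..<p}" for r
    using assms(2) assms(3)[of r] by (auto simp: t_eq)
  show "neg_extend p m t k \<in> {0<..<p}"
    using neg_extend_range[OF \<open>0 < m\<close> range] .
  show "\<not> same_sign q p (neg_extend p m t k) (neg_extend p m t (Suc k))"
  proof (rule neg_extend_alternating_not_same_sign[OF \<open>0 < m\<close> \<open>2 * q \<le> p\<close> range])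
    show "t r \<in> {1..q} \<and> t (Suc r) \<in> {p - q..<p} \<or> t r \<in> {p - q..<p} \<and> t (Suc r) \<in> {1..q}" for r
      using assms(2) assms(3)[of r] assms(3)[of "Suc r"] by (auto simp: t_eq)
    show "t 0 \<in> {q, p - q}"
      using \<open>u 0 = q\<close> by (simp add: t_eq)
  qed
qed

theorem corollary3p17:
  fixes q q' :: int and n m :: nat and s :: "nat \<Rightarrow> int"
  assumes "q' \<ge> 2 * q + 1" and "2 * q + 1 > 4" and "n > 1"
    and "OS q n s m" and "s 0 = 0"
  shows "s_disjoint q' n
           (ring_seq (map (\<lambda>i. s i mod q') [0..<m] @ map (\<lambda>i. (- s i) mod q') [0..<m]))
           (ring_seq (let t = (\<lambda>i. ((-1) ^ (i + m - 1) * (if s i mod q' \<noteq> 0 then s i else q)) mod q')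
                      in map t [0..<m] @ map (\<lambda>i. (- t i) mod q') [0..<m]))"
proof -
  have "0 < m" and s_range: "\<And>i. s i \<in> {0..<q}"
    using \<open>OS q n s m\<close> by (auto simp: OS_def window_seq_def)
  have "2 * q \<le> q'" "q \<le> q'"
    using \<open>q' \<ge> 2 * q + 1\<close> s_range[of 0] by auto
  have s_mod: "s i mod q' = s i" for i
    using s_range[of i] \<open>q \<le> q'\<close> by simp
  define u where "u i = (if s i mod q' \<noteq> 0 then s i else q)" for i
  have u_range: "u i \<in> {1..q}" for i
    using s_range[of i] s_range[of 0] by (auto simp: u_def s_mod)
  have "u 0 = q"
    using \<open>s 0 = 0\<close> by (simp add: u_def)
  have "ring_seq (map (\<lambda>i. s i mod q') [0..<m] @ map (\<lambda>i. (- s i) mod q') [0..<m])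
          = neg_extend q' m s"
    by (simp add: neg_extend_def s_mod)
  moreover have "ring_seq (let t = (\<lambda>i. ((-1) ^ (i + m - 1) * (if s i mod q' \<noteq> 0 then s i else q)) mod q')
                      in map t [0..<m] @ map (\<lambda>i. (- t i) mod q') [0..<m])
          = neg_extend q' m (\<lambda>i. ((-1) ^ (i + (m - 1)) * u i) mod q')"
    using \<open>0 < m\<close> by (simp add: neg_extend_def u_def)
  moreover have
    "s_disjoint q' n (neg_extend q' m s) (neg_extend q' m (\<lambda>i. ((-1) ^ (i + (m - 1)) * u i) mod q'))"
    using \<open>1 < n\<close> neg_extend_zero_or_same_sign[where s = s, OF \<open>0 < m\<close> \<open>q \<le> q'\<close> s_range \<open>s 0 = 0\<close>]
      neg_extend_signed[where u = u and c = "m - 1", OF \<open>0 < m\<close> \<open>2 * q \<le> q'\<close> u_range \<open>u 0 = q\<close>]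
    by (rule s_disjoint_if_sign_pattern)
  ultimately show ?thesis by simp
qed

end
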